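(* Let $(V,Y,\mathbf 1,\omega)$ be a vertex operator algebra. For $v\in V$ define $X(v,x)=Y(x^{L(0)}v,x)$ (so $X(v,x)=x^{\mathrm{wt}\,v}Y(v,x)$ for homogeneous $v$), and for $u\in V$ define Zhu's operator $Y[u,y]=Y(e^{yL(0)}u,\,e^{y}-1)$. Let $\delta(x)=\sum_{n\in\mathbb Z}x^n$ and let $$y_{21}=\log\Big(1-\frac{x_2}{x_1}\Big),\quad y_{12}=\log\Big(1-\frac{x_1}{x_2}\Big),\quad y_{01}=\log\Big(1-\frac{x_0}{x_1}\Big),$$ each understood as the formal series $\log(1-z)=-\sum_{k\ge1}z^k/k$. Then for all $u,v\in V$, $$x_0^{-1}\delta\Big(e^{y_{21}}\frac{x_1}{x_0}\Big)X(u,x_1)X(v,x_2)-x_0^{-1}\delta\Big(-e^{y_{12}}\frac{x_2}{x_0}\Big)X(v,x_2)X(u,x_1)=x_2^{-1}\delta\Big(e^{y_{01}}\frac{x_1}{x_2}\Big)X\big(Y[u,-y_{01}]v,\,x_2\big).$$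
   Context: A vertex operator algebra $(V,Y,\mathbf 1,\omega)$ over $\mathbb C$ is a $\mathbb Z$-graded vector space $V=\coprod_{n\in\mathbb Z}V_{(n)}$ (for $v\in V_{(n)}$, $\mathrm{wt}\,v=n$) with $\dim V_{(n)}<\infty$ and $V_{(n)}=0$ for $n$ sufficiently small, equipped with a linear map $v\mapsto Y(v,x)=\sum_{n\in\mathbb Z}v_nx^{-n-1}\in(\mathrm{End}\,V)[[x,x^{-1}]]$ and vectors $\mathbf 1\in V_{(0)}$, $\omega\in V_{(2)}$, such that for $u,v\in V$: $u_nv=0$ for $n$ sufficiently large; $Y(\mathbf 1,x)=1$; $Y(v,x)\mathbf 1\in V[[x]]$ with constant term $v$; the Jacobi identity $x_0^{-1}\delta\big(\frac{x_1-x_2}{x_0}\big)Y(u,x_1)Y(v,x_2)-x_0^{-1}\delta\big(\frac{x_2-x_1}{-x_0}\big)Y(v,x_2)Y(u,x_1)=x_2^{-1}\delta\big(\frac{x_1-x_0}{x_2}\big)Y(Y(u,x_0)v,x_2)$ holds, where binomial expressions are expanded in nonnegative powers of the second variable; writing $Y(\omega,x)=\sum_n L(n)x^{-n-2}$, the operators $L(n)$ satisfy $[L(m),L(n)]=(m-n)L(m+n)+\frac1{12}(m^3-m)\delta_{m+n,0}c$ for a constant $c\in\mathbb C$ (the rank); $L(0)v=(\mathrm{wt}\,v)v$ for homogeneous $v$; and $\frac{d}{dx}Y(v,x)=Y(L(-1)v,x)$. Here all variables $x_0,x_1,x_2,y$ are commuting formal variables; $e^{y}$ and $e^{yL(0)}$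 are formal exponential series; $Y(\cdot,x_2)$ and $X(\cdot,x_2)$ are extended linearly to formal series with coefficients in $V$; and expressions such as $e^{y_{21}}$, $e^{-y_{01}}$ are the corresponding formal series (e.g. $e^{y_{21}}=1-x_2/x_1$). *)

theory Defs
  imports Complex_Main "HOL-Library.Groups_Big_Fun"
    "HOL-Computational_Algebra.Formal_Laurent_Series"
begin

unbundle fps_syntax

text \<open>
  Y u n w denotes the mode u_n w, i.e. Y(u,x) = sum_n (Y u n) x^(-n-1).
  Formal series in x0, x1, x2 (with values in V, or scalar valued) are represented
  by their coefficient functions: f (a,b,c) is the coefficient of x0^a x1^b x2^c.
  An identity of End(V)-valued formal series is stated coefficientwise after
  applying both sides to an arbitrary vector w.
\<close>

definition is_grading :: "(complex \<Rightarrow> 'v::ab_group_add \<Rightarrow> 'v) \<Rightarrow> (int \<Rightarrow> 'v set) \<Rightarrow> bool" where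
  "is_grading sc gr \<longleftrightarrow>
     (\<forall>n. module.subspace sc (gr n) \<and> (\<exists>B. finite B \<and> gr n \<subseteq> module.span sc B))
   \<and> (\<exists>N. \<forall>n<N. gr n = {0})
   \<and> (\<forall>v. \<exists>!p. finite {n. p n \<noteq> 0} \<and> (\<forall>n. p n \<in> gr n) \<and> v = Sum_any p)"

definition gcomp :: "(int \<Rightarrow> 'v::ab_group_add set) \<Rightarrow> 'v \<Rightarrow> int \<Rightarrow> 'v" where
  "gcomp gr v = (THE p. finite {n. p n \<noteq> 0} \<and> (\<forall>n. p n \<in> gr n) \<and> v = Sum_any p)"

definition smul3 :: "(complex \<Rightarrow> 'v::ab_group_add \<Rightarrow> 'v) \<Rightarrow> (int \<times> int \<times> int \<Rightarrow> complex)
    \<Rightarrow> (int \<times> int \<times> int \<Rightarrow> 'v) \<Rightarrow> int \<times> int \<times> int \<Rightarrow> 'v" where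
  "smul3 sc f g = (\<lambda>(a,b,c). Sum_any (\<lambda>(p,q,r). sc (f (p,q,r)) (g (a-p, b-q, c-r))))"

text \<open>Standard delta-function expressions of the Jacobi identity, binomial expansions
  in nonnegative powers of the second variable.\<close>

text \<open>x0^-1 delta((x1-x2)/x0) = sum_n x0^(-n-1) (x1-x2)^n\<close>
definition deltaJ1 :: "int \<times> int \<times> int \<Rightarrow> complex" where
  "deltaJ1 = (\<lambda>(a,b,c). if c \<ge> 0 \<and> a + b + c = -1
      then (-1)^nat c * (of_int (-a-1) gchoose nat c) else 0)"

text \<open>x0^-1 delta((x2-x1)/(-x0)) = sum_n (-1)^n x0^(-n-1) (x2-x1)^n\<close>
definition deltaJ2 :: "int \<times> int \<times> int \<Rightarrow> complex" where
  "deltaJ2 = (\<lambda>(a,b,c). if b \<ge> 0 \<and> a + b + c = -1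
      then (-1) powi (-a-1) * (-1)^nat b * (of_int (-a-1) gchoose nat b) else 0)"

text \<open>x2^-1 delta((x1-x0)/x2) = sum_n x2^(-n-1) (x1-x0)^n\<close>
definition deltaJ3 :: "int \<times> int \<times> int \<Rightarrow> complex" where
  "deltaJ3 = (\<lambda>(a,b,c). if a \<ge> 0 \<and> a + b + c = -1
      then (-1)^nat a * (of_int (-c-1) gchoose nat a) else 0)"

definition jacobi_identity :: "(complex \<Rightarrow> 'v::ab_group_add \<Rightarrow> 'v) \<Rightarrow> ('v \<Rightarrow> int \<Rightarrow> 'v \<Rightarrow> 'v) \<Rightarrow> bool" where
  "jacobi_identity sc Y \<longleftrightarrow> (\<forall>u v w abc.
      smul3 sc deltaJ1 (\<lambda>(i,j,l). if i = 0 then Y u (-j-1) (Y v (-l-1) w) else 0) abc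
    - smul3 sc deltaJ2 (\<lambda>(i,j,l). if i = 0 then Y v (-l-1) (Y u (-j-1) w) else 0) abc
    = smul3 sc deltaJ3 (\<lambda>(i,j,l). if j = 0 then Y (Y u (-i-1) v) (-l-1) w else 0) abc)"

definition VOA :: "(complex \<Rightarrow> 'v::ab_group_add \<Rightarrow> 'v) \<Rightarrow> (int \<Rightarrow> 'v set) \<Rightarrow>
    ('v \<Rightarrow> int \<Rightarrow> 'v \<Rightarrow> 'v) \<Rightarrow> 'v \<Rightarrow> 'v \<Rightarrow> complex \<Rightarrow> bool" where
  "VOA sc gr Y one omega crank \<longleftrightarrow>
     vector_space sc \<and> is_grading sc gr
   \<and> (\<forall>u n. module_hom sc sc (Y u n)) \<and> (\<forall>n w. module_hom sc sc (\<lambda>u. Y u n w))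
   \<and> one \<in> gr 0 \<and> omega \<in> gr 2
   \<and> (\<forall>u v. \<exists>N. \<forall>n\<ge>N. Y u n v = 0)
   \<and> (\<forall>n v. Y one n v = (if n = -1 then v else 0))
   \<and> (\<forall>v n. n \<ge> 0 \<longrightarrow> Y v n one = 0) \<and> (\<forall>v. Y v (-1) one = v)
   \<and> jacobi_identity sc Y
   \<and> (\<forall>m n w. Y omega (m+1) (Y omega (n+1) w) - Y omega (n+1) (Y omega (m+1) w)
         = sc (of_int (m-n)) (Y omega (m+n+1) w)
           + (if m + n = 0 then sc (of_int (m^3 - m) / 12 * crank) w else 0))
   \<and> (\<forall>n v. v \<in> gr n \<longrightarrow> Y omega 1 v = sc (of_int n) v)
   \<and> (\<forall>v n w. Y (Y omega 0 v) n w = sc (of_int (-n)) (Y v (n-1) w))"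

text \<open>Here L(n) = Y omega (n+1); the last clause is d/dx Y(v,x) = Y(L(-1)v,x) coefficientwise.\<close>

text \<open>Coefficient of x^j in X(v,x) = Y(x^L(0) v, x) = sum_n x^n Y(v_(n),x), applied to w.\<close>
definition Xcoeff :: "(int \<Rightarrow> 'v::ab_group_add set) \<Rightarrow> ('v \<Rightarrow> int \<Rightarrow> 'v \<Rightarrow> 'v) \<Rightarrow> 'v \<Rightarrow> int \<Rightarrow> 'v \<Rightarrow> 'v" where
  "Xcoeff gr Y v j w = Sum_any (\<lambda>n. Y (gcomp gr v n) (n - j - 1) w)"

definition log1m :: "complex fps" where
  "log1m = Abs_fps (\<lambda>k. if k = 0 then 0 else - 1 / of_nat k)"

definition fexp :: "complex fps \<Rightarrow> complex fls" where
  "fexp y = fps_to_fls (fps_exp 1 oo y)"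

text \<open>y21 = log(1-x2/x1), y12 = log(1-x1/x2), y01 = log(1-x0/x1): each is log1m in the
  respective ratio variable.  Coefficients of x0^-1 delta(e^y21 x1/x0),
  x0^-1 delta(-e^y12 x2/x0) and x2^-1 delta(e^y01 x1/x2), with delta(z) = sum_n z^n.\<close>
definition deltaA :: "int \<times> int \<times> int \<Rightarrow> complex" where
  "deltaA = (\<lambda>(a,b,c). if b + c = -a-1 then (fexp log1m powi (-a-1)) $$ c else 0)"

definition deltaB :: "int \<times> int \<times> int \<Rightarrow> complex" where
  "deltaB = (\<lambda>(a,b,c). if b + c = -a-1 then ((- fexp log1m) powi (-a-1)) $$ b else 0)"

definition deltaC :: "int \<times> int \<times> int \<Rightarrow> complex" where
  "deltaC = (\<lambda>(a,b,c). if a + b = -c-1 then (fexp log1m powi (-c-1)) $$ a else 0)"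

text \<open>Zhu's operator Y[u,y]v = Y(e^(y L(0)) u, e^y - 1) v = sum_(n,m) e^(n y) (e^y - 1)^(-m-1) (u_(n))_m v
  with y := -y01; coefficient of (x0/x1)^k.\<close>
definition zhuY_my01 :: "(complex \<Rightarrow> 'v::ab_group_add \<Rightarrow> 'v) \<Rightarrow> (int \<Rightarrow> 'v set) \<Rightarrow>
    ('v \<Rightarrow> int \<Rightarrow> 'v \<Rightarrow> 'v) \<Rightarrow> 'v \<Rightarrow> 'v \<Rightarrow> int \<Rightarrow> 'v" where
  "zhuY_my01 sc gr Y u v k = Sum_any (\<lambda>(n,m).
      sc ((fexp (fps_const (of_int n) * (- log1m)) * (fexp (- log1m) - 1) powi (-m-1)) $$ k)
         (Y (gcomp gr u n) m v))"

end

theory Submission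
  imports Defs
begin

(* With e^y21 = 1 - x2/x1, e^y12 = 1 - x1/x2 and e^y01 = 1 - x0/x1, the three delta-function
   expressions are exactly those of the Jacobi identity, expanded in the usual direction.
   For homogeneous u, v of weights n, k we have X(u,x1) = x1^n Y(u,x1) and X(v,x2) = x2^k Y(v,x2),
   so the left-hand side is a shift of the left-hand side of the Jacobi identity and hence of
   x2^-1 delta((x1-x0)/x2) Y(Y(u,x0)v,x2).  On the right, with z = x0/x1, one has
   Y[u,-y01]v = sum_m z^(-m-1) (1-z)^(m+1-n) u_m v, and u_m v is homogeneous of weight n+k-m-1
   because [L(0), u_m] = (n-m-1) u_m.  Comparing coefficients, the two sides agree by
   Vandermonde's convolution (1-z)^A (1-z)^B = (1-z)^(A+B).  The general case follows by
   decomposing u and v into homogeneous components, with a single truncation bound for all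
   pairs of components keeping every sum finite. *)

section \<open>The binomial series of 1 - X\<close>

definition fps_one_minus_X_pow :: "'a::field_char_0 \<Rightarrow> 'a fps" where
  "fps_one_minus_X_pow a = fps_binomial a oo - fps_X"

lemma fps_one_minus_X_pow_nth: "fps_one_minus_X_pow a $ n = (-1)^n * (a gchoose n)"
  by (simp add: fps_one_minus_X_pow_def fps_compose_uminus')

lemma fps_one_minus_X_pow_add:
  "fps_one_minus_X_pow (a + b) = fps_one_minus_X_pow a * fps_one_minus_X_pow b"
  by (simp add: fps_one_minus_X_pow_def fps_binomial_add_mult fps_compose_mult_distrib)

lemma fps_one_minus_X_pow_0 [simp]: "fps_one_minus_X_pow 0 = 1"
  by (simp add: fps_one_minus_X_pow_def)

lemma fps_one_minus_X_pow_1: "fps_one_minus_X_pow 1 = 1 - fps_X"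
  by (simp add: fps_one_minus_X_pow_def fps_binomial_1 fps_compose_add_distrib)

lemma fps_one_minus_X_pow_inverse: "fps_one_minus_X_pow a * fps_one_minus_X_pow (- a) = 1"
  by (simp flip: fps_one_minus_X_pow_add)

lemma fps_one_minus_X_pow_power: "fps_one_minus_X_pow a ^ k = fps_one_minus_X_pow (of_nat k * a)"
  by (induction k) (simp_all add: fps_one_minus_X_pow_add algebra_simps)

lemma fps_one_minus_X_pow_minus_one: "fps_one_minus_X_pow (-1) - 1 = fps_X * fps_one_minus_X_pow (-1)"
proof -
  have "fps_one_minus_X_pow 1 * fps_one_minus_X_pow (-1) = (1::'a fps)"
    by (rule fps_one_minus_X_pow_inverse)
  then show ?thesis by (simp add: fps_one_minus_X_pow_1 algebra_simps)
qed

lemma fls_one_minus_X_pow_power_int: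
  "fps_to_fls (fps_one_minus_X_pow a) powi k = fps_to_fls (fps_one_minus_X_pow (of_int k * a))"
proof (cases "k \<ge> 0")
  case True
  then show ?thesis
    by (simp add: power_int_def fps_to_fls_power[symmetric] fps_one_minus_X_pow_power)
next
  case False
  let ?j = "nat (-k)"
  have "fps_to_fls (fps_one_minus_X_pow a) powi k = inverse (fps_to_fls (fps_one_minus_X_pow (of_nat ?j * a)))"
    using False by (simp add: power_int_def power_inverse fps_to_fls_power[symmetric] fps_one_minus_X_pow_power)
  also have "\<dots> = fps_to_fls (fps_one_minus_X_pow (- (of_nat ?j * a)))"
    by (rule inverse_unique) (simp add: fls_times_fps_to_fls[symmetric] fps_one_minus_X_pow_inverse)
  finally show ?thesis using False by simp
qed

definition one_minus_X_pow_coeff :: "int \<Rightarrow> int \<Rightarrow> complex" where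
  "one_minus_X_pow_coeff A K = fps_to_fls (fps_one_minus_X_pow (of_int A)) $$ K"

lemma one_minus_X_pow_coeff_eq:
  "one_minus_X_pow_coeff A K = (if K \<ge> 0 then (-1)^nat K * (of_int A gchoose nat K) else 0)"
  by (simp add: one_minus_X_pow_coeff_def fps_one_minus_X_pow_nth)

lemma one_minus_X_pow_coeff_convolution:
  assumes "0 \<le> K" "K \<le> L"
  shows "(\<Sum>p=0..L. one_minus_X_pow_coeff A p * one_minus_X_pow_coeff B (K - p))
           = one_minus_X_pow_coeff (A + B) K"
proof -
  have "one_minus_X_pow_coeff (A + B) K
      = (fps_one_minus_X_pow (of_int A) * fps_one_minus_X_pow (of_int B)) $ nat K"
    using assms by (simp add: one_minus_X_pow_coeff_def fps_one_minus_X_pow_add)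
  also have "\<dots> = (\<Sum>i=0..nat K. one_minus_X_pow_coeff A (int i) * one_minus_X_pow_coeff B (K - int i))"
    unfolding fps_mult_nth using assms
    by (intro sum.cong) (auto simp: one_minus_X_pow_coeff_def nat_diff_distrib)
  also have "\<dots> = (\<Sum>p=0..K. one_minus_X_pow_coeff A p * one_minus_X_pow_coeff B (K - p))"
    using assms by (intro sum.reindex_bij_witness[of _ nat int]) auto
  also have "\<dots> = (\<Sum>p=0..L. one_minus_X_pow_coeff A p * one_minus_X_pow_coeff B (K - p))"
    using assms by (intro sum.mono_neutral_left) (auto simp: one_minus_X_pow_coeff_eq)
  finally show ?thesis by simp
qed

section \<open>The formal series in the theorem\<close>

lemma log1m_eq_fps_ln: "log1m = fps_ln 1 oo - fps_X"
  by (simp add: log1m_def fps_compose_uminus' fps_ln_nth fps_eq_iff power_minus_mult[symmetric])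

lemma fps_exp_compose_fps_ln: "fps_exp 1 oo fps_ln (1::'a::field_char_0) = 1 + fps_X"
proof -
  have "fps_exp 1 oo fps_ln (1::'a) = ((fps_exp 1 - 1) + 1) oo fps_inv (fps_exp 1 - 1)"
    by (simp add: fps_ln_fps_exp_inv[of 1, simplified])
  also have "\<dots> = ((fps_exp 1 - 1) oo fps_inv (fps_exp 1 - 1)) + 1"
    by (simp only: fps_compose_add_distrib) simp
  also have "\<dots> = fps_X + 1" by (subst fps_inv_right) auto
  finally show ?thesis by simp
qed

lemma fps_exp_compose_log1m: "fps_exp 1 oo log1m = 1 - fps_X"
proof -
  have "fps_exp 1 oo log1m = (fps_exp 1 oo fps_ln 1) oo (- fps_X)"
    unfolding log1m_eq_fps_ln by (rule fps_compose_assoc) auto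
  then show ?thesis
    by (simp add: fps_exp_compose_fps_ln fps_compose_add_distrib fps_compose_uminus)
qed

lemma fps_exp_compose_scale: "fps_exp (1::complex) oo (fps_const c * y) = fps_exp c oo y"
proof (rule fps_ext)
  fix n
  show "(fps_exp 1 oo (fps_const c * y)) $ n = (fps_exp c oo y) $ n"
    unfolding fps_compose_nth
    by (rule sum.cong) (simp_all only: power_mult_distrib fps_const_power[symmetric]
        fps_mult_left_const_nth fps_exp_nth power_one, simp)
qed

lemma fps_exp_of_int_compose_log1m: "fps_exp (of_int k) oo log1m = fps_one_minus_X_pow (of_int k)"
proof -
  have log1m_0: "log1m $ 0 = 0" by (simp add: log1m_def)
  have "fps_exp (of_nat j) oo log1m = fps_one_minus_X_pow (of_nat j)" for j
  proof -
    have "fps_exp (of_nat j) oo log1m = (fps_exp 1 oo log1m) ^ j"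
      by (simp add: fps_exp_power_mult fps_compose_power log1m_0)
    then show ?thesis
      by (simp add: fps_exp_compose_log1m fps_one_minus_X_pow_1[symmetric] fps_one_minus_X_pow_power)
  qed
  moreover have "fps_exp (- of_nat j) oo log1m = fps_one_minus_X_pow (- of_nat j)" for j
  proof -
    have "fps_exp (- of_nat j) oo log1m = inverse (fps_exp (of_nat j) oo log1m)"
      by (simp add: fps_exp_neg fps_inverse_compose log1m_0)
    also have "\<dots> = fps_one_minus_X_pow (- of_nat j)"
      by (rule fps_inverse_unique) (simp add: \<open>fps_exp (of_nat j) oo log1m = _\<close> fps_one_minus_X_pow_inverse)
    finally show ?thesis .
  qed
  ultimately show ?thesis
    by (cases k rule: int_cases4) simp_all
qed

lemma fexp_log1m: "fexp log1m = fps_to_fls (fps_one_minus_X_pow 1)"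
  by (simp add: fexp_def fps_exp_compose_log1m fps_one_minus_X_pow_1)

lemma fexp_scaled_neg_log1m:
  "fexp (fps_const (of_int k) * - log1m) = fps_to_fls (fps_one_minus_X_pow (- of_int k))"
proof -
  have "fps_const (of_int k) * - log1m = fps_const (of_int (- k)) * log1m"
    by (simp flip: fps_const_neg)
  then show ?thesis
    using fps_exp_of_int_compose_log1m[of "- k"]
    by (simp add: fexp_def fps_exp_compose_scale del: fps_const_neg)
qed

lemma fexp_log1m_power_int: "fexp log1m powi N = fps_to_fls (fps_one_minus_X_pow (of_int N))"
  by (simp add: fexp_log1m fls_one_minus_X_pow_power_int)

lemma deltaA_eq_deltaJ1: "deltaA = deltaJ1"
  by (auto simp: fun_eq_iff deltaA_def deltaJ1_def fexp_log1m_power_int fps_one_minus_X_pow_nth)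

lemma deltaB_eq_deltaJ2: "deltaB = deltaJ2"
  by (auto simp: fun_eq_iff deltaB_def deltaJ2_def power_int_minus_left fexp_log1m_power_int
      fps_one_minus_X_pow_nth)

lemma deltaC_eq_deltaJ3: "deltaC = deltaJ3"
  by (auto simp: fun_eq_iff deltaC_def deltaJ3_def fexp_log1m_power_int fps_one_minus_X_pow_nth)

lemma zhu_series_coeff:
  "(fexp (fps_const (of_int n) * - log1m) * (fexp (- log1m) - 1) powi (-m-1)) $$ k
     = one_minus_X_pow_coeff (m + 1 - n) (k + m + 1)"
proof -
  have "fexp (- log1m) - 1 = fps_to_fls (fps_one_minus_X_pow (-1) - 1)"
    using fexp_scaled_neg_log1m[of 1] by simp
  also have "\<dots> = fls_X * fps_to_fls (fps_one_minus_X_pow (-1))"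
    by (simp only: fps_one_minus_X_pow_minus_one fls_times_fps_to_fls) simp
  finally have "(fexp (- log1m) - 1) powi (-m-1)
      = fls_X_intpow (-m-1) * fps_to_fls (fps_one_minus_X_pow (of_int (m + 1)))"
    by (simp add: power_int_mult_distrib fls_one_minus_X_pow_power_int add.commute)
  then have "fexp (fps_const (of_int n) * - log1m) * (fexp (- log1m) - 1) powi (-m-1)
      = fls_X_intpow (-m-1) * (fps_to_fls (fps_one_minus_X_pow (- of_int n))
          * fps_to_fls (fps_one_minus_X_pow (of_int (m + 1))))"
    by (simp only: fexp_scaled_neg_log1m mult.left_commute)
  also have "\<dots> = fls_X_intpow (-m-1) * fps_to_fls (fps_one_minus_X_pow (of_int (m + 1 - n)))"
    by (simp add: fls_times_fps_to_fls[symmetric] fps_one_minus_X_pow_add[symmetric])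
  finally have "fexp (fps_const (of_int n) * - log1m) * (fexp (- log1m) - 1) powi (-m-1)
      = fls_X_intpow (-m-1) * fps_to_fls (fps_one_minus_X_pow (of_int (m + 1 - n)))" .
  then show ?thesis
    by (simp only: fls_X_intpow_times_conv_shift fls_shift_nth)
       (simp add: one_minus_X_pow_coeff_def algebra_simps)
qed

section \<open>Products of scalar and vector-valued series\<close>

lemma smul3_shift:
  "smul3 sc f (\<lambda>(i,j,l). g (i, j - s, l - t)) (a,b,c) = smul3 sc f g (a, b - s, c - t)"
  by (simp add: smul3_def algebra_simps)

context
  fixes sc :: "complex \<Rightarrow> 'v::ab_group_add \<Rightarrow> 'v"
  assumes sc: "module sc"
begin

interpretation module sc by (rule sc)

lemma smul3_sum:
  assumes I: "finite I"
    and fin: "\<And>i. i \<in> I \<Longrightarrow> finite {(p,q,r). f (p,q,r) \<noteq> 0 \<and> G i (a-p, b-q, c-r) \<noteq> 0}"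
  shows "smul3 sc f (\<lambda>x. \<Sum>i\<in>I. G i x) (a,b,c) = (\<Sum>i\<in>I. smul3 sc f (G i) (a,b,c))"
proof -
  let ?T = "\<lambda>i (p,q,r). sc (f (p,q,r)) (G i (a-p, b-q, c-r))"
  let ?S = "\<Union>i\<in>I. {(p,q,r). f (p,q,r) \<noteq> 0 \<and> G i (a-p, b-q, c-r) \<noteq> 0}"
  have "finite ?S" using I fin by blast
  have "smul3 sc f (\<lambda>x. \<Sum>i\<in>I. G i x) (a,b,c) = Sum_any (\<lambda>t. \<Sum>i\<in>I. ?T i t)"
    unfolding smul3_def prod.case
    by (intro arg_cong[where f = Sum_any]) (auto simp: scale_sum_right)
  also have "\<dots> = (\<Sum>t\<in>?S. \<Sum>i\<in>I. ?T i t)"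
    by (rule Sum_any.expand_superset[OF \<open>finite ?S\<close>]) (force intro: sum.neutral)
  also have "\<dots> = (\<Sum>i\<in>I. \<Sum>t\<in>?S. ?T i t)" by (rule sum.swap)
  also have "\<dots> = (\<Sum>i\<in>I. smul3 sc f (G i) (a,b,c))"
    unfolding smul3_def prod.case
    by (intro sum.cong refl Sum_any.expand_superset[OF \<open>finite ?S\<close>, symmetric]) auto
  finally show ?thesis .
qed

lemma smul3_sum_shifted:
  assumes W: "finite W"
    and fin: "\<And>n k a b c. (n,k) \<in> W \<Longrightarrow>
                finite {(p,q,r). f (p,q,r) \<noteq> 0 \<and> g n k (a-p, b-q, c-r) \<noteq> 0}"
    and G: "\<And>i j l. G (i,j,l) = (\<Sum>(n,k)\<in>W. g n k (i, j - n, l - k))"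
  shows "smul3 sc f G (a,b,c) = (\<Sum>(n,k)\<in>W. smul3 sc f (g n k) (a, b - n, c - k))"
proof -
  define H where "H nk = (\<lambda>(i,j,l). g (fst nk) (snd nk) (i, j - fst nk, l - snd nk))" for nk
  have "G = (\<lambda>x. \<Sum>nk\<in>W. H nk x)"
    by (auto simp: fun_eq_iff G H_def split_def)
  then have "smul3 sc f G (a,b,c) = (\<Sum>nk\<in>W. smul3 sc f (H nk) (a,b,c))"
  proof (simp only:, intro smul3_sum[OF W])
    fix nk assume "nk \<in> W"
    then show "finite {(p,q,r). f (p,q,r) \<noteq> 0 \<and> H nk (a-p, b-q, c-r) \<noteq> 0}"
      using fin[of "fst nk" "snd nk" a "b - fst nk" "c - snd nk"] by (simp add: H_def algebra_simps)
  qed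
  also have "\<dots> = (\<Sum>(n,k)\<in>W. smul3 sc f (g n k) (a, b - n, c - k))"
    by (intro sum.cong refl) (clarsimp simp: H_def smul3_shift)
  finally show ?thesis .
qed

(* deltaJ3 (p,q,r) vanishes unless p \<ge> 0 and p + q + r = -1, so against a series supported
   on the graph j = \<phi> i with i \<ge> -N only the terms with 0 \<le> p \<le> a + N survive. *)
lemma smul3_deltaJ3_graph:
  assumes G: "\<And>i j l. G (i,j,l) \<noteq> 0 \<Longrightarrow> j = \<phi> i \<and> -N \<le> i"
  shows "smul3 sc deltaJ3 G (a,b,c) = (\<Sum>p=0..a+N.
           sc (deltaJ3 (p, b - \<phi> (a-p), \<phi> (a-p) - b - p - 1))
              (G (a-p, \<phi> (a-p), c + 1 + p + b - \<phi> (a-p))))"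
proof -
  define F where "F p = (p, b - \<phi> (a-p), \<phi> (a-p) - b - p - 1)" for p
  let ?T = "\<lambda>(p,q,r). sc (deltaJ3 (p,q,r)) (G (a-p, b-q, c-r))"
  have "(p,q,r) \<in> F ` {0..a+N}" if "?T (p,q,r) \<noteq> 0" for p q r
  proof -
    from that have "deltaJ3 (p,q,r) \<noteq> 0" "G (a-p, b-q, c-r) \<noteq> 0" by auto
    then have "0 \<le> p" "p + q + r = -1" "b - q = \<phi> (a-p)" "-N \<le> a-p"
      using G by (auto simp: deltaJ3_def split: if_splits)
    then show "(p,q,r) \<in> F ` {0..a+N}"
      by (intro image_eqI[of _ _ p]) (auto simp: F_def)
  qed
  then have "{t. ?T t \<noteq> 0} \<subseteq> F ` {0..a+N}" by auto
  then have "smul3 sc deltaJ3 G (a,b,c) = sum ?T (F ` {0..a+N})"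
    unfolding smul3_def prod.case by (intro Sum_any.expand_superset) auto
  also have "\<dots> = (\<Sum>p=0..a+N. ?T (F p))"
    by (rule sum.reindex_cong[of F]) (auto simp: inj_on_def F_def)
  finally show ?thesis by (simp add: F_def algebra_simps)
qed

end

section \<open>Vertex operator algebras\<close>

definition Y_product_coeff ::
    "('v \<Rightarrow> int \<Rightarrow> 'v \<Rightarrow> 'v) \<Rightarrow> 'v \<Rightarrow> 'v \<Rightarrow> 'v \<Rightarrow> int \<times> int \<times> int \<Rightarrow> 'v::ab_group_add" where
  "Y_product_coeff Y x y w = (\<lambda>(i,j,l). if i = 0 then Y x (-j-1) (Y y (-l-1) w) else 0)"

definition Y_product_swap_coeff ::
    "('v \<Rightarrow> int \<Rightarrow> 'v \<Rightarrow> 'v) \<Rightarrow> 'v \<Rightarrow> 'v \<Rightarrow> 'v \<Rightarrow> int \<times> int \<times> int \<Rightarrow> 'v::ab_group_add" where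
  "Y_product_swap_coeff Y x y w = (\<lambda>(i,j,l). if i = 0 then Y y (-l-1) (Y x (-j-1) w) else 0)"

definition Y_iterate_coeff ::
    "('v \<Rightarrow> int \<Rightarrow> 'v \<Rightarrow> 'v) \<Rightarrow> 'v \<Rightarrow> 'v \<Rightarrow> 'v \<Rightarrow> int \<times> int \<times> int \<Rightarrow> 'v::ab_group_add" where
  "Y_iterate_coeff Y x y w = (\<lambda>(i,j,l). if j = 0 then Y (Y x (-i-1) y) (-l-1) w else 0)"

locale voa =
  fixes sc :: "complex \<Rightarrow> 'v::ab_group_add \<Rightarrow> 'v" and gr :: "int \<Rightarrow> 'v set"
    and Y :: "'v \<Rightarrow> int \<Rightarrow> 'v \<Rightarrow> 'v" and one omega :: 'v and crank :: complex
  assumes VOA: "VOA sc gr Y one omega crank"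
begin

sublocale vector_space sc
  using VOA by (simp add: VOA_def)

lemma Y_hom_right: "module_hom sc sc (Y u n)"
  using VOA by (simp add: VOA_def)

lemma Y_hom_left: "module_hom sc sc (\<lambda>u. Y u n w)"
  using VOA by (simp add: VOA_def)

lemma Y_sum_right: "Y u n (sum f S) = (\<Sum>i\<in>S. Y u n (f i))"
  by (rule module_hom.sum[OF Y_hom_right])

lemma Y_scale_right: "Y u n (sc c x) = sc c (Y u n x)"
  by (rule module_hom.scale[OF Y_hom_right])

lemma Y_zero_right [simp]: "Y u n 0 = 0"
  by (rule module_hom.zero[OF Y_hom_right])

lemma Y_add_left: "Y (x + y) n w = Y x n w + Y y n w"
  using module_hom.add[OF Y_hom_left] by blast

lemma Y_scale_left: "Y (sc c x) n w = sc c (Y x n w)"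
  using module_hom.scale[OF Y_hom_left] by blast

lemma Y_zero_left [simp]: "Y 0 n w = 0"
  using module_hom.zero[OF Y_hom_left] by blast

lemma Y_truncation: "\<exists>N. \<forall>m\<ge>N. Y u m v = 0"
  using VOA by (simp add: VOA_def)

lemma Y_truncation_uniform:
  assumes "finite I"
  shows "\<exists>N. \<forall>i\<in>I. \<forall>m\<ge>N. Y (x i) m (y i) = 0"
  using assms
proof (induction I rule: finite_induct)
  case (insert i I)
  obtain N1 where "\<forall>i\<in>I. \<forall>m\<ge>N1. Y (x i) m (y i) = 0" using insert.IH by blast
  moreover obtain N2 where "\<forall>m\<ge>N2. Y (x i) m (y i) = 0" using Y_truncation by blast
  ultimately show ?case by (intro exI[of _ "max N1 N2"]) auto
qed simp

lemma jacobi: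
  "smul3 sc deltaJ1 (Y_product_coeff Y x y w) abc - smul3 sc deltaJ2 (Y_product_swap_coeff Y x y w) abc
     = smul3 sc deltaJ3 (Y_iterate_coeff Y x y w) abc"
  using VOA unfolding VOA_def jacobi_identity_def Y_product_coeff_def Y_product_swap_coeff_def
    Y_iterate_coeff_def by blast

lemma L0_homogeneous: "v \<in> gr n \<Longrightarrow> Y omega 1 v = sc (of_int n) v"
  using VOA by (simp add: VOA_def)

lemma L_minus_one_derivative: "Y (Y omega 0 v) n w = sc (of_int (-n)) (Y v (n-1) w)"
  using VOA by (simp add: VOA_def)

lemma gr_subspace: "subspace (gr n)"
  using VOA by (simp add: VOA_def is_grading_def)

lemma gcomp_ex1: "\<exists>!p. finite {n. p n \<noteq> 0} \<and> (\<forall>n. p n \<in> gr n) \<and> v = Sum_any p"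
  using VOA by (simp add: VOA_def is_grading_def)

lemma gcomp_in_gr: "gcomp gr v n \<in> gr n"
  and finite_gcomp_support: "finite {n. gcomp gr v n \<noteq> 0}"
  and Sum_any_gcomp: "Sum_any (gcomp gr v) = v"
  using theI'[OF gcomp_ex1[of v]] unfolding gcomp_def by auto

lemma gcomp_unique:
  assumes "finite {n. p n \<noteq> 0}" "\<And>n. p n \<in> gr n" "v = Sum_any p"
  shows "gcomp gr v = p"
  unfolding gcomp_def using assms by (intro the1_equality[OF gcomp_ex1]) auto

definition weights :: "'v \<Rightarrow> int set" where
  "weights v = {n. gcomp gr v n \<noteq> 0}"

lemma finite_weights: "finite (weights v)"
  by (simp add: weights_def finite_gcomp_support)

lemma sum_gcomp_weights: "(\<Sum>n\<in>weights v. gcomp gr v n) = v"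
  using Sum_any_gcomp[of v] by (simp add: weights_def Sum_any.expand_set)

definition truncation_bound :: "'v \<Rightarrow> 'v \<Rightarrow> int \<Rightarrow> bool" where
  "truncation_bound u v N \<longleftrightarrow>
     (\<forall>n\<in>weights u. \<forall>k\<in>weights v. \<forall>m\<ge>N. Y (gcomp gr u n) m (gcomp gr v k) = 0)"

lemma ex_truncation_bound: "\<exists>N. truncation_bound u v N"
  using Y_truncation_uniform[of "weights u \<times> weights v" "\<lambda>(n,k). gcomp gr u n" "\<lambda>(n,k). gcomp gr v k"]
  by (auto simp: truncation_bound_def finite_weights)

lemma gcomp_homogeneous: "x \<in> gr d \<Longrightarrow> gcomp gr x = (\<lambda>n. if n = d then x else 0)"
  by (rule gcomp_unique) (auto intro: subspace_0[OF gr_subspace])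

lemma gcomp_add: "gcomp gr (x + y) = (\<lambda>n. gcomp gr x n + gcomp gr y n)"
proof (rule gcomp_unique)
  show "finite {n. gcomp gr x n + gcomp gr y n \<noteq> 0}"
    by (rule finite_subset[of _ "weights x \<union> weights y"]) (auto simp: weights_def finite_gcomp_support)
  show "gcomp gr x n + gcomp gr y n \<in> gr n" for n
    by (intro subspace_add[OF gr_subspace] gcomp_in_gr)
  show "x + y = Sum_any (\<lambda>n. gcomp gr x n + gcomp gr y n)"
    by (simp add: Sum_any.distrib finite_gcomp_support Sum_any_gcomp)
qed

lemma gcomp_scale: "gcomp gr (sc c x) = (\<lambda>n. sc c (gcomp gr x n))"
proof (rule gcomp_unique)
  show "finite {n. sc c (gcomp gr x n) \<noteq> 0}"
    by (rule finite_subset[OF _ finite_gcomp_support[of x]]) auto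
  show "sc c (gcomp gr x n) \<in> gr n" for n
    by (intro subspace_scale[OF gr_subspace] gcomp_in_gr)
  have "Sum_any (\<lambda>n. sc c (gcomp gr x n)) = sc c (\<Sum>n\<in>weights x. gcomp gr x n)"
    by (subst Sum_any.expand_superset[of "weights x"])
       (auto simp: finite_gcomp_support weights_def scale_sum_right)
  then show "sc c x = Sum_any (\<lambda>n. sc c (gcomp gr x n))"
    by (simp add: sum_gcomp_weights)
qed

lemma L0_commutator:
  "Y omega 1 (Y x m y) - Y x m (Y omega 1 y) = Y (Y omega 0 x) (m+1) y + Y (Y omega 1 x) m y"
proof -
  \<comment> \<open>the coefficient of x0^-1 x1^-2 in the Jacobi identity for omega and x\<close>
  let ?abc = "(-1, -2, -m-1)"
  have "smul3 sc deltaJ1 (Y_product_coeff Y omega x y) ?abc = Y omega 1 (Y x m y)"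
    unfolding smul3_def prod.case
    by (subst Sum_any.expand_superset[where A = "{(-1,0,0)}"])
       (auto simp: deltaJ1_def gbinomial_0_left Y_product_coeff_def split: if_split_asm)
  moreover have "smul3 sc deltaJ2 (Y_product_swap_coeff Y omega x y) ?abc = Y x m (Y omega 1 y)"
    unfolding smul3_def prod.case
    by (subst Sum_any.expand_superset[where A = "{(-1,0,0)}"])
       (auto simp: deltaJ2_def gbinomial_0_left Y_product_swap_coeff_def split: if_split_asm)
  moreover have "smul3 sc deltaJ3 (Y_iterate_coeff Y omega x y) ?abc
      = Y (Y omega 0 x) (m+1) y + Y (Y omega 1 x) m y"
  proof -
    have "deltaJ3 (p,-2,r) = (if (p,r) = (0,1) \<or> (p,r) = (1,0) then 1 else 0)" for p r
    proof (cases "p \<ge> 2")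
      case True
      have "(- of_int r - 1 :: complex) gchoose nat p = 0" if "p + r = 1"
      proof -
        have "r = 1 - p" using that by simp
        with True have "(- of_int r - 1 :: complex) = of_nat (nat (p - 2))" by simp
        then show ?thesis
          by (simp only: binomial_gbinomial[symmetric]) (use True in \<open>simp add: binomial_eq_0\<close>)
      qed
      then show ?thesis using True by (auto simp: deltaJ3_def)
    qed (auto simp: deltaJ3_def)
    then show ?thesis
      unfolding smul3_def prod.case
      by (subst Sum_any.expand_superset[where A = "{(0,-2,1),(1,-2,0)}"])
         (auto simp: Y_iterate_coeff_def add.commute split: if_split_asm)
  qed
  ultimately show ?thesis using jacobi[of omega x y ?abc] by simp
qed

lemma gcomp_L0: "gcomp gr (Y omega 1 x) = (\<lambda>n. sc (of_int n) (gcomp gr x n))"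
proof (rule gcomp_unique)
  show "finite {n. sc (of_int n) (gcomp gr x n) \<noteq> 0}"
    by (rule finite_subset[OF _ finite_gcomp_support[of x]]) auto
  show "sc (of_int n) (gcomp gr x n) \<in> gr n" for n
    by (intro subspace_scale[OF gr_subspace] gcomp_in_gr)
  have "Y omega 1 x = (\<Sum>n\<in>weights x. sc (of_int n) (gcomp gr x n))"
    by (subst sum_gcomp_weights[symmetric]) (simp add: Y_sum_right L0_homogeneous[OF gcomp_in_gr])
  also have "\<dots> = Sum_any (\<lambda>n. sc (of_int n) (gcomp gr x n))"
    by (rule Sum_any.expand_superset[symmetric]) (auto simp: finite_gcomp_support weights_def)
  finally show "Y omega 1 x = Sum_any (\<lambda>n. sc (of_int n) (gcomp gr x n))" .
qed

lemma L0_eigenvector_in_gr: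
  assumes "Y omega 1 x = sc (of_int d) x"
  shows "x \<in> gr d"
proof -
  have "n = d" if "n \<in> weights x" for n
  proof -
    have "sc (of_int n) (gcomp gr x n) = sc (of_int d) (gcomp gr x n)"
      using arg_cong[OF assms, of "\<lambda>v. gcomp gr v n"] by (simp add: gcomp_L0 gcomp_scale)
    then show "n = d" using that by (simp add: weights_def)
  qed
  then have "(\<Sum>n\<in>weights x. gcomp gr x n) \<in> gr d"
    by (intro subspace_sum[OF gr_subspace]) (use gcomp_in_gr in blast)
  then show ?thesis by (simp add: sum_gcomp_weights)
qed

lemma mode_in_gr:
  assumes x: "x \<in> gr n" and y: "y \<in> gr k"
  shows "Y x m y \<in> gr (n + k - m - 1)"
proof (rule L0_eigenvector_in_gr)
  have "Y omega 1 (Y x m y) = Y x m (Y omega 1 y) + Y (Y omega 0 x) (m+1) y + Y (Y omega 1 x) m y"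
    using L0_commutator[of x m y] by (simp add: algebra_simps)
  also have "\<dots> = sc (of_int k) (Y x m y) + sc (of_int (-(m+1))) (Y x m y) + sc (of_int n) (Y x m y)"
    by (simp add: L0_homogeneous[OF x] L0_homogeneous[OF y] L_minus_one_derivative
        Y_scale_left Y_scale_right)
  also have "\<dots> = sc (of_int k + of_int (-(m+1)) + of_int n) (Y x m y)"
    by (simp only: scale_left_distrib)
  finally show "Y omega 1 (Y x m y) = sc (of_int (n + k - m - 1)) (Y x m y)"
    by (simp add: algebra_simps)
qed

lemma Xcoeff_eq_sum_weights: "Xcoeff gr Y v l w = (\<Sum>n\<in>weights v. Y (gcomp gr v n) (n - l - 1) w)"
  unfolding Xcoeff_def
  by (rule Sum_any.expand_superset) (auto simp: finite_gcomp_support weights_def)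

lemma Xcoeff_add: "Xcoeff gr Y (x + y) l w = Xcoeff gr Y x l w + Xcoeff gr Y y l w"
proof -
  have "finite {n. Y (gcomp gr v n) (n - l - 1) w \<noteq> 0}" for v
    by (rule finite_subset[OF _ finite_gcomp_support[of v]]) auto
  then show ?thesis by (simp add: Xcoeff_def gcomp_add Y_add_left Sum_any.distrib)
qed

lemma Xcoeff_scale: "Xcoeff gr Y (sc c x) l w = sc c (Xcoeff gr Y x l w)"
proof -
  have "Xcoeff gr Y (sc c x) l w = Sum_any (\<lambda>n. sc c (Y (gcomp gr x n) (n - l - 1) w))"
    by (simp add: Xcoeff_def gcomp_scale Y_scale_left)
  also have "\<dots> = (\<Sum>n\<in>weights x. sc c (Y (gcomp gr x n) (n - l - 1) w))"
    by (rule Sum_any.expand_superset) (auto simp: finite_gcomp_support weights_def)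
  finally show ?thesis by (simp add: Xcoeff_eq_sum_weights scale_sum_right)
qed

lemma Xcoeff_zero [simp]: "Xcoeff gr Y 0 l w = 0"
  using Xcoeff_scale[of 0 0] by simp

lemma Xcoeff_sum: "Xcoeff gr Y (sum f S) l w = (\<Sum>i\<in>S. Xcoeff gr Y (f i) l w)"
  by (induction S rule: infinite_finite_induct) (simp_all add: Xcoeff_add)

lemma Xcoeff_homogeneous:
  assumes "x \<in> gr d"
  shows "Xcoeff gr Y x l w = Y x (d - l - 1) w"
proof -
  have "Xcoeff gr Y x l w = Sum_any (\<lambda>n. if n = d then Y x (n - l - 1) w else 0)"
    unfolding Xcoeff_def
    by (rule arg_cong[where f = Sum_any]) (auto simp: gcomp_homogeneous[OF assms])
  then show ?thesis by simp
qed

section \<open>Expansion of both sides\<close>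

lemma X_product_expansion:
  "Xcoeff gr Y u j (Xcoeff gr Y v l w) = (\<Sum>(n,k)\<in>weights u \<times> weights v.
     Y (gcomp gr u n) (n - j - 1) (Y (gcomp gr v k) (k - l - 1) w))"
  by (simp add: Xcoeff_eq_sum_weights Y_sum_right sum.cartesian_product)

lemma X_product_swap_expansion:
  "Xcoeff gr Y v l (Xcoeff gr Y u j w) = (\<Sum>(n,k)\<in>weights u \<times> weights v.
     Y (gcomp gr v k) (k - l - 1) (Y (gcomp gr u n) (n - j - 1) w))"
  unfolding Xcoeff_eq_sum_weights Y_sum_right sum.cartesian_product[symmetric]
  by (rule sum.swap)

lemma finite_support_deltaJ1_product:
  "finite {(p,q,r). deltaJ1 (p,q,r) \<noteq> 0 \<and> Y_product_coeff Y x y w (a-p, b-q, c-r) \<noteq> 0}"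
proof -
  obtain N where N: "\<forall>m\<ge>N. Y y m w = 0" using Y_truncation by blast
  have "(p,q,r) \<in> (\<lambda>r. (a, -1-a-r, r)) ` {0..c+N}"
    if "deltaJ1 (p,q,r) \<noteq> 0" "Y_product_coeff Y x y w (a-p, b-q, c-r) \<noteq> 0" for p q r
  proof -
    have "0 \<le> r" "p + q + r = -1" "p = a" "Y y (-(c-r)-1) w \<noteq> 0"
      using that by (auto simp: deltaJ1_def Y_product_coeff_def split: if_splits)
    moreover from this(4) N have "-(c-r)-1 < N" by (meson not_le)
    ultimately show ?thesis by (intro image_eqI[of _ _ r]) auto
  qed
  then have "{(p,q,r). deltaJ1 (p,q,r) \<noteq> 0 \<and> Y_product_coeff Y x y w (a-p, b-q, c-r) \<noteq> 0}
      \<subseteq> (\<lambda>r. (a, -1-a-r, r)) ` {0..c+N}"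
    by blast
  then show ?thesis by (rule finite_subset) simp
qed

lemma finite_support_deltaJ2_product_swap:
  "finite {(p,q,r). deltaJ2 (p,q,r) \<noteq> 0 \<and> Y_product_swap_coeff Y x y w (a-p, b-q, c-r) \<noteq> 0}"
proof -
  obtain N where N: "\<forall>m\<ge>N. Y x m w = 0" using Y_truncation by blast
  have "(p,q,r) \<in> (\<lambda>q. (a, q, -1-a-q)) ` {0..b+N}"
    if "deltaJ2 (p,q,r) \<noteq> 0" "Y_product_swap_coeff Y x y w (a-p, b-q, c-r) \<noteq> 0" for p q r
  proof -
    have "0 \<le> q" "p + q + r = -1" "p = a" "Y x (-(b-q)-1) w \<noteq> 0"
      using that by (auto simp: deltaJ2_def Y_product_swap_coeff_def split: if_splits)
    moreover from this(4) N have "-(b-q)-1 < N" by (meson not_le)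
    ultimately show ?thesis by (intro image_eqI[of _ _ q]) auto
  qed
  then have "{(p,q,r). deltaJ2 (p,q,r) \<noteq> 0 \<and> Y_product_swap_coeff Y x y w (a-p, b-q, c-r) \<noteq> 0}
      \<subseteq> (\<lambda>q. (a, q, -1-a-q)) ` {0..b+N}"
    by blast
  then show ?thesis by (rule finite_subset) simp
qed

lemma smul3_X_product:
  "smul3 sc deltaJ1 (\<lambda>(i,j,l). if i = 0 then Xcoeff gr Y u j (Xcoeff gr Y v l w) else 0) (a,b,c)
     = (\<Sum>(n,k)\<in>weights u \<times> weights v.
          smul3 sc deltaJ1 (Y_product_coeff Y (gcomp gr u n) (gcomp gr v k) w) (a, b - n, c - k))"
proof (rule smul3_sum_shifted[OF module_axioms])
  show "finite (weights u \<times> weights v)" by (simp add: finite_weights)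
  show "finite {(p,q,r). deltaJ1 (p,q,r) \<noteq> 0 \<and>
      Y_product_coeff Y (gcomp gr u n) (gcomp gr v k) w (a-p, b-q, c-r) \<noteq> 0}" for n k a b c
    by (rule finite_support_deltaJ1_product)
qed (auto simp: X_product_expansion Y_product_coeff_def split_def algebra_simps
      intro!: sum.neutral)

lemma smul3_X_product_swap:
  "smul3 sc deltaJ2 (\<lambda>(i,j,l). if i = 0 then Xcoeff gr Y v l (Xcoeff gr Y u j w) else 0) (a,b,c)
     = (\<Sum>(n,k)\<in>weights u \<times> weights v.
          smul3 sc deltaJ2 (Y_product_swap_coeff Y (gcomp gr u n) (gcomp gr v k) w) (a, b - n, c - k))"
proof (rule smul3_sum_shifted[OF module_axioms])
  show "finite (weights u \<times> weights v)" by (simp add: finite_weights)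
  show "finite {(p,q,r). deltaJ2 (p,q,r) \<noteq> 0 \<and>
      Y_product_swap_coeff Y (gcomp gr u n) (gcomp gr v k) w (a-p, b-q, c-r) \<noteq> 0}" for n k a b c
    by (rule finite_support_deltaJ2_product_swap)
qed (auto simp: X_product_swap_expansion Y_product_swap_coeff_def split_def algebra_simps
      intro!: sum.neutral)

lemma smul3_Y_iterate:
  assumes N: "\<forall>m\<ge>N. Y x m y = 0"
  shows "smul3 sc deltaJ3 (Y_iterate_coeff Y x y w) (a,b,c) = (\<Sum>m=-a-1..<N.
           sc (one_minus_X_pow_coeff (a+b+m+1) (a+m+1)) (Y (Y x m y) (-a-b-c-m-3) w))"
proof -
  have "Y_iterate_coeff Y x y w (i,j,l) \<noteq> 0 \<Longrightarrow> j = 0 \<and> -N \<le> i" for i j l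
    using N[rule_format, of "-i-1"] by (cases "-N \<le> i") (auto simp: Y_iterate_coeff_def split: if_splits)
  then have "smul3 sc deltaJ3 (Y_iterate_coeff Y x y w) (a,b,c) = (\<Sum>p=0..a+N.
      sc (deltaJ3 (p, b - 0, 0 - b - p - 1)) (Y_iterate_coeff Y x y w (a - p, 0, c + 1 + p + b - 0)))"
    by (rule smul3_deltaJ3_graph[OF module_axioms])
  also have "\<dots> = (\<Sum>m=-a-1..<N.
      sc (deltaJ3 (m+a+1, b, - b - (m+a+1) - 1))
         (Y_iterate_coeff Y x y w (a - (m+a+1), 0, c + 1 + (m+a+1) + b)))"
    by (rule sum.reindex_bij_witness[of _ "\<lambda>m. m + a + 1" "\<lambda>p. p - a - 1"]) auto
  also have "\<dots> = (\<Sum>m=-a-1..<N.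
      sc (one_minus_X_pow_coeff (a+b+m+1) (a+m+1)) (Y (Y x m y) (-a-b-c-m-3) w))"
  proof (intro sum.cong refl)
    fix m assume "m \<in> {-a-1..<N}"
    then have "deltaJ3 (m+a+1, b, - b - (m+a+1) - 1) = one_minus_X_pow_coeff (a+b+m+1) (a+m+1)"
      by (simp add: deltaJ3_def one_minus_X_pow_coeff_eq add_ac)
    moreover have "-(a - (m+a+1)) - 1 = m" "-(c + 1 + (m+a+1) + b) - 1 = -a-b-c-m-3"
      by simp_all
    ultimately show "sc (deltaJ3 (m+a+1, b, - b - (m+a+1) - 1))
        (Y_iterate_coeff Y x y w (a - (m+a+1), 0, c + 1 + (m+a+1) + b))
      = sc (one_minus_X_pow_coeff (a+b+m+1) (a+m+1)) (Y (Y x m y) (-a-b-c-m-3) w)"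
      by (simp only: Y_iterate_coeff_def prod.case) simp
  qed
  finally show ?thesis .
qed

lemma lhs_expansion:
  assumes N: "truncation_bound u v N"
  shows "smul3 sc deltaJ1 (\<lambda>(i,j,l). if i = 0 then Xcoeff gr Y u j (Xcoeff gr Y v l w) else 0) (a,b,c)
       - smul3 sc deltaJ2 (\<lambda>(i,j,l). if i = 0 then Xcoeff gr Y v l (Xcoeff gr Y u j w) else 0) (a,b,c)
       = (\<Sum>(n,k)\<in>weights u \<times> weights v. \<Sum>m=-a-1..<N.
            sc (one_minus_X_pow_coeff (a+b-n+m+1) (a+m+1))
               (Y (Y (gcomp gr u n) m (gcomp gr v k)) (n+k-m-a-b-c-3) w))"
proof -
  have "smul3 sc deltaJ3 (Y_iterate_coeff Y (gcomp gr u n) (gcomp gr v k) w) (a, b - n, c - k)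
      = (\<Sum>m=-a-1..<N. sc (one_minus_X_pow_coeff (a+b-n+m+1) (a+m+1))
           (Y (Y (gcomp gr u n) m (gcomp gr v k)) (n+k-m-a-b-c-3) w))"
    if "n \<in> weights u" "k \<in> weights v" for n k
  proof -
    have "a + (b - n) + m + 1 = a + b - n + m + 1" "-a - (b - n) - (c - k) - m - 3 = n + k - m - a - b - c - 3"
      for m by simp_all
    moreover have "\<forall>m\<ge>N. Y (gcomp gr u n) m (gcomp gr v k) = 0"
      using N that by (simp add: truncation_bound_def)
    ultimately show ?thesis by (simp only: smul3_Y_iterate)
  qed
  then show ?thesis
    unfolding smul3_X_product smul3_X_product_swap sum_subtractf[symmetric]
    by (intro sum.cong refl) (clarsimp simp: case_prod_beta jacobi)
qed

lemma zhuY_expansion: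
  assumes N: "truncation_bound u v N"
    and lo: "lo \<le> -i-1"
  shows "zhuY_my01 sc gr Y u v i = (\<Sum>(n,k)\<in>weights u \<times> weights v. \<Sum>m=lo..<N.
           sc (one_minus_X_pow_coeff (m+1-n) (i+m+1)) (Y (gcomp gr u n) m (gcomp gr v k)))"
proof -
  let ?c = "\<lambda>n m. one_minus_X_pow_coeff (m+1-n) (i+m+1)"
  have Y_v: "Y (gcomp gr u n) m v = (\<Sum>k\<in>weights v. Y (gcomp gr u n) m (gcomp gr v k))" for n m
    by (simp only: Y_sum_right[symmetric] sum_gcomp_weights)
  have "zhuY_my01 sc gr Y u v i = Sum_any (\<lambda>(n,m). sc (?c n m) (Y (gcomp gr u n) m v))"
    by (simp only: zhuY_my01_def zhu_series_coeff)
  also have "\<dots> = (\<Sum>(n,m)\<in>weights u \<times> {lo..<N}. sc (?c n m) (Y (gcomp gr u n) m v))"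
  proof (rule Sum_any.expand_superset)
    have "(n,m) \<in> weights u \<times> {lo..<N}" if nz: "sc (?c n m) (Y (gcomp gr u n) m v) \<noteq> 0" for n m
    proof -
      from nz have n: "n \<in> weights u" by (auto simp: weights_def)
      have "0 \<le> i + m + 1" using nz by (auto simp: one_minus_X_pow_coeff_eq split: if_splits)
      moreover have "m < N"
      proof (rule ccontr)
        assume "\<not> m < N"
        then have "Y (gcomp gr u n) m v = 0" using N n by (simp add: Y_v truncation_bound_def)
        then show False using nz by simp
      qed
      ultimately show ?thesis using n lo by simp
    qed
    then show "{nm. (case nm of (n,m) \<Rightarrow> sc (?c n m) (Y (gcomp gr u n) m v)) \<noteq> 0}
        \<subseteq> weights u \<times> {lo..<N}" by auto
  qed (simp add: finite_weights)
  also have "\<dots> = (\<Sum>n\<in>weights u. \<Sum>k\<in>weights v. \<Sum>m=lo..<N.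
      sc (?c n m) (Y (gcomp gr u n) m (gcomp gr v k)))"
    by (simp add: sum.cartesian_product[symmetric] Y_v scale_sum_right sum.swap[of _ "{lo..<N}"])
  finally show ?thesis by (simp only: sum.cartesian_product[symmetric])
qed

lemma zhuY_eq_0:
  assumes "truncation_bound u v N"
    and "i < -N"
  shows "zhuY_my01 sc gr Y u v i = 0"
  using zhuY_expansion[OF assms(1), of "-i-1" i] assms(2) by simp

lemma X_zhuY_expansion:
  assumes "truncation_bound u v N"
    and "lo \<le> -i-1"
  shows "Xcoeff gr Y (zhuY_my01 sc gr Y u v i) l w = (\<Sum>(n,k)\<in>weights u \<times> weights v. \<Sum>m=lo..<N.
           sc (one_minus_X_pow_coeff (m+1-n) (i+m+1))
              (Y (Y (gcomp gr u n) m (gcomp gr v k)) (n + k - m - l - 2) w))"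
  by (simp add: zhuY_expansion[OF assms] Xcoeff_sum Xcoeff_scale split_def
      Xcoeff_homogeneous[OF mode_in_gr[OF gcomp_in_gr gcomp_in_gr]] algebra_simps)

lemma smul3_deltaJ3_X_zhuY:
  assumes N: "truncation_bound u v N"
  shows "smul3 sc deltaJ3 (\<lambda>(i,j,l). if j = - i then Xcoeff gr Y (zhuY_my01 sc gr Y u v i) l w else 0) (a,b,c)
       = (\<Sum>p=0..a+N. sc (one_minus_X_pow_coeff (a+b) p)
           (\<Sum>(n,k)\<in>weights u \<times> weights v. \<Sum>m=-a-1..<N.
              sc (one_minus_X_pow_coeff (m+1-n) (a-p+m+1))
                 (Y (Y (gcomp gr u n) m (gcomp gr v k)) (n+k-m-a-b-c-3) w)))"
    (is "smul3 sc deltaJ3 ?G (a,b,c) = (\<Sum>p=0..a+N. sc (?c (a+b) p) (\<Sum>(n,k)\<in>?W. \<Sum>m\<in>?M. ?F p n k m))")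
proof -
  have "?G (i,j,l) \<noteq> 0 \<Longrightarrow> j = - i \<and> -N \<le> i" for i j l
    using zhuY_eq_0[OF N, of i] by (cases "-N \<le> i") (auto split: if_splits)
  then have "smul3 sc deltaJ3 ?G (a,b,c) = (\<Sum>p=0..a+N.
      sc (deltaJ3 (p, b - - (a-p), - (a-p) - b - p - 1)) (?G (a-p, - (a-p), c + 1 + p + b - - (a-p))))"
    by (rule smul3_deltaJ3_graph[OF module_axioms])
  also have "\<dots> = (\<Sum>p=0..a+N. sc (?c (a+b) p) (\<Sum>(n,k)\<in>?W. \<Sum>m\<in>?M. ?F p n k m))"
  proof (intro sum.cong refl)
    fix p assume p: "p \<in> {0..a+N}"
    then have "deltaJ3 (p, b - - (a-p), - (a-p) - b - p - 1) = ?c (a+b) p"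
      by (simp add: deltaJ3_def one_minus_X_pow_coeff_eq algebra_simps)
    moreover have "?G (a-p, - (a-p), c + 1 + p + b - - (a-p))
        = (\<Sum>(n,k)\<in>?W. \<Sum>m\<in>?M. sc (?c (m+1-n) (a-p+m+1))
             (Y (Y (gcomp gr u n) m (gcomp gr v k)) (n + k - m - (c + 1 + p + b - - (a-p)) - 2) w))"
      unfolding prod.case if_P[OF refl] by (rule X_zhuY_expansion[OF N]) (use p in simp)
    moreover have "n + k - m - (c + 1 + p + b - - (a-p)) - 2 = n+k-m-a-b-c-3" for n k m
      by simp
    ultimately show "sc (deltaJ3 (p, b - - (a-p), - (a-p) - b - p - 1))
        (?G (a-p, - (a-p), c + 1 + p + b - - (a-p)))
        = sc (?c (a+b) p) (\<Sum>(n,k)\<in>?W. \<Sum>m\<in>?M. ?F p n k m)"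
      by (simp only:)
  qed
  finally show ?thesis .
qed

lemma rhs_expansion:
  assumes N: "truncation_bound u v N"
  shows "smul3 sc deltaJ3 (\<lambda>(i,j,l). if j = - i then Xcoeff gr Y (zhuY_my01 sc gr Y u v i) l w else 0) (a,b,c)
       = (\<Sum>(n,k)\<in>weights u \<times> weights v. \<Sum>m=-a-1..<N.
            sc (one_minus_X_pow_coeff (a+b-n+m+1) (a+m+1))
               (Y (Y (gcomp gr u n) m (gcomp gr v k)) (n+k-m-a-b-c-3) w))"
    (is "_ = (\<Sum>(n,k)\<in>?W. \<Sum>m\<in>?M. ?E n k m)")
proof -
  let ?c = one_minus_X_pow_coeff
  let ?Ymk = "\<lambda>n k m. Y (Y (gcomp gr u n) m (gcomp gr v k)) (n+k-m-a-b-c-3) w"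
  have "smul3 sc deltaJ3 (\<lambda>(i,j,l). if j = - i then Xcoeff gr Y (zhuY_my01 sc gr Y u v i) l w else 0) (a,b,c)
      = (\<Sum>p=0..a+N. sc (?c (a+b) p) (\<Sum>(n,k)\<in>?W. \<Sum>m\<in>?M. sc (?c (m+1-n) (a-p+m+1)) (?Ymk n k m)))"
    by (rule smul3_deltaJ3_X_zhuY[OF N])
  also have "\<dots> = (\<Sum>p=0..a+N. \<Sum>(n,k)\<in>?W. \<Sum>m\<in>?M.
      sc (?c (a+b) p * ?c (m+1-n) (a-p+m+1)) (?Ymk n k m))"
    by (simp only: scale_sum_right scale_scale split_def)
  also have "\<dots> = (\<Sum>(n,k)\<in>?W. \<Sum>m\<in>?M. \<Sum>p=0..a+N.
      sc (?c (a+b) p * ?c (m+1-n) (a-p+m+1)) (?Ymk n k m))"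
    by (subst sum.swap) (simp only: split_def sum.swap[of _ "{0..a+N}"])
  also have "\<dots> = (\<Sum>(n,k)\<in>?W. \<Sum>m\<in>?M.
      sc (\<Sum>p=0..a+N. ?c (a+b) p * ?c (m+1-n) (a+m+1-p)) (?Ymk n k m))"
  proof -
    have "a - p + m + 1 = a + m + 1 - p" for p m :: int by simp
    then show ?thesis by (simp only: scale_sum_left)
  qed
  also have "\<dots> = (\<Sum>(n,k)\<in>?W. \<Sum>m\<in>?M. ?E n k m)"
  proof -
    have "(\<Sum>p=0..a+N. ?c (a+b) p * ?c (m+1-n) (a+m+1-p)) = ?c (a+b-n+m+1) (a+m+1)"
      if "m \<in> ?M" for n m
      using that one_minus_X_pow_coeff_convolution[of "a+m+1" "a+N" "a+b" "m+1-n"]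
      by (simp add: algebra_simps)
    then show ?thesis by (intro sum.cong refl) (clarsimp simp: split_def)
  qed
  finally show ?thesis .
qed

lemma X_jacobi_identity:
  "smul3 sc deltaA (\<lambda>(i,j,l). if i = 0 then Xcoeff gr Y u j (Xcoeff gr Y v l w) else 0) abc
     - smul3 sc deltaB (\<lambda>(i,j,l). if i = 0 then Xcoeff gr Y v l (Xcoeff gr Y u j w) else 0) abc
   = smul3 sc deltaC (\<lambda>(i,j,l). if j = - i then Xcoeff gr Y (zhuY_my01 sc gr Y u v i) l w else 0) abc"
proof -
  obtain a b c where abc: "abc = (a,b,c)" by (cases abc)
  obtain N where N: "truncation_bound u v N" using ex_truncation_bound by blast
  show ?thesis
    unfolding abc deltaA_eq_deltaJ1 deltaB_eq_deltaJ2 deltaC_eq_deltaJ3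
    by (simp only: lhs_expansion[OF N] rhs_expansion[OF N])
qed

end

theorem theorem4p2:
  fixes sc :: "complex \<Rightarrow> 'v::ab_group_add \<Rightarrow> 'v"
    and gr :: "int \<Rightarrow> 'v set" and Y :: "'v \<Rightarrow> int \<Rightarrow> 'v \<Rightarrow> 'v"
    and one omega :: 'v and crank :: complex
    and u v w :: 'v and abc :: "int \<times> int \<times> int"
  assumes "VOA sc gr Y one omega crank"
  shows "smul3 sc deltaA (\<lambda>(i,j,l). if i = 0 then Xcoeff gr Y u j (Xcoeff gr Y v l w) else 0) abc
       - smul3 sc deltaB (\<lambda>(i,j,l). if i = 0 then Xcoeff gr Y v l (Xcoeff gr Y u j w) else 0) abc
       = smul3 sc deltaC (\<lambda>(i,j,l). if j = - i then Xcoeff gr Y (zhuY_my01 sc gr Y u v i) l w else 0) abc"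
  by (rule voa.X_jacobi_identity[OF voa.intro[OF assms]])

end
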